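(* Let $A, B \in\mathbb{C}^{n\times n}$ be matrices of index at most $1$. Then $A\leq\# B$ if and only if $A\leq^{GD1}B$, where $A\leq\# B$ means $A^2=BA$ and $R(A^* )\subseteq R(B^* )$.
   Context: For $A\in\mathbb{C}^{n\times n}$, $ind(A)$ is the smallest nonnegative integer $k$ with $\mathrm{rank}(A^k)=\mathrm{rank}(A^{k+1})$. $A\{1\}$ is the set of matrices $X$ with $AXA=A$. With $k=ind(A)$, $A\{GD\}$ is the set of matrices $X$ with $AXA=A$, $XA^{k+1}=A^k$, $A^{k+1}X=A^k$ (G-Drazin inverses). A GD1 inverse of $A$ is a matrix $A^{GD1}=A^{GD}AA^-$ with $A^-\in A\{1\}$, $A^{GD}\in A\{GD\}$. We write $A\leq^{GD1}B$ if $AA^{GD1}=BA^{GD1}$ and $A^{GD1}A=A^{GD1}B$ for some GD1 inverse $A^{GD1}$ of $A$. $A^*$ is the conjugate transpose and $R(\cdot)$ the range. *)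

theory Defs
  imports "HOL-Analysis.Analysis"
begin

type_synonym 'n cmat = "complex^'n^'n"

primrec mpow :: "'n cmat \<Rightarrow> nat \<Rightarrow> ('n::finite) cmat" where
  "mpow A 0 = mat 1"
| "mpow A (Suc k) = A ** mpow A k"

definition ind :: "('n::finite) cmat \<Rightarrow> nat" where
  "ind A = (LEAST k. rank (mpow A k) = rank (mpow A (k+1)))"

definition ctrans :: "('n::finite) cmat \<Rightarrow> 'n cmat" where
  "ctrans A = (\<chi> i j. cnj (A $ j $ i))"

definition mrange :: "('n::finite) cmat \<Rightarrow> (complex^'n) set" where
  "mrange M = range (\<lambda>x. M *v x)"

definition inv1 :: "('n::finite) cmat \<Rightarrow> 'n cmat set" where
  "inv1 A = {X. A ** X ** A = A}"

definition invGD :: "('n::finite) cmat \<Rightarrow> 'n cmat set" where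
  "invGD A = {X. A ** X ** A = A \<and> X ** mpow A (ind A + 1) = mpow A (ind A)
                 \<and> mpow A (ind A + 1) ** X = mpow A (ind A)}"

definition invGD1 :: "('n::finite) cmat \<Rightarrow> 'n cmat set" where
  "invGD1 A = {G ** A ** M | G M. G \<in> invGD A \<and> M \<in> inv1 A}"

definition GD1_le :: "('n::finite) cmat \<Rightarrow> 'n cmat \<Rightarrow> bool" where
  "GD1_le A B = (\<exists>X \<in> invGD1 A. A ** X = B ** X \<and> X ** A = X ** B)"

definition sharp_le :: "('n::finite) cmat \<Rightarrow> 'n cmat \<Rightarrow> bool" where
  "sharp_le A B = (A ** A = B ** A \<and> mrange (ctrans A) \<subseteq> mrange (ctrans B))"

end

(*
  For index at most one, rank A^2 = rank A.  Comparing row spaces gives A = V A^2,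
  comparing column spaces gives A = A^2 U, and G = V A U is an inner inverse of A that
  commutes with A.  For such A the G-Drazin inverses are exactly the inner inverses
  commuting with A, and the range inclusion for the conjugate transposes amounts to
  A = Z B.

  If A^2 = B A and A = Z B, let H be any inner inverse of B.  Then A H B = A,
  B G A = A and A H A = A, so X = G A H is a GD1 inverse of A with A X = A H = B X
  and X A = G A = X B.  Conversely, for X = G A M with A M A = A, multiplying
  A X = B X by A on the right gives B G A = A, whence A^2 = B A, and multiplying
  X A = X B by A on the left gives A = (A M) B.
*)

theory Submission
  imports Defs
begin

lemma range_mult_subset_iff:
  fixes M :: "'a::comm_semiring_1^'n^'m" and N :: "'a^'p^'m"
  shows "range ((*v) M) \<subseteq> range ((*v) N) \<longleftrightarrow> (\<exists>W. M = N ** W)"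
proof
  assume "range ((*v) M) \<subseteq> range ((*v) N)"
  then have "\<forall>j. \<exists>w. M *v axis j 1 = N *v w"
    by blast
  then obtain w where w: "\<And>j. M *v axis j 1 = N *v w j"
    by metis
  have "M $ i $ j = (N ** (\<chi> k j. w j $ k)) $ i $ j" for i j
  proof -
    have "M $ i $ j = (M *v axis j 1) $ i"
      by (simp add: matrix_vector_mult_def axis_def if_distrib if_distribR sum.delta cong: if_cong)
    also have "\<dots> = (N *v w j) $ i"
      by (simp only: w)
    also have "\<dots> = (N ** (\<chi> k j. w j $ k)) $ i $ j"
      by (simp add: matrix_vector_mult_def matrix_matrix_mult_def)
    finally show ?thesis .
  qed
  then show "\<exists>W. M = N ** W"
    by (auto simp: vec_eq_iff)
next
  assume "\<exists>W. M = N ** W"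
  then show "range ((*v) M) \<subseteq> range ((*v) N)"
    by (auto simp: matrix_vector_mul_assoc[symmetric])
qed

lemma subspace_range_mult:
  fixes A :: "'a::field^'n^'m"
  shows "vec.subspace (range ((*v) A))"
  by (metis vec.subspace_UNIV vec.subspace_image)

lemma span_range_mult:
  fixes A :: "'a::field^'n^'m"
  shows "vec.span (range ((*v) A)) = range ((*v) A)"
  by (simp add: subspace_range_mult)

lemma span_columns_eq_range:
  fixes A :: "'a::field^'n^'m"
  shows "vec.span (columns A) = range ((*v) A)"
proof
  have "column j A = A *v axis j 1" for j
    by (simp add: vec_eq_iff column_def matrix_vector_mult_def axis_def
        if_distrib if_distribR sum.delta cong: if_cong)
  then have "columns A \<subseteq> range ((*v) A)"
    by (auto simp: columns_def)
  then show "vec.span (columns A) \<subseteq> range ((*v) A)"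
    using subspace_range_mult by (rule vec.span_minimal)
next
  show "range ((*v) A) \<subseteq> vec.span (columns A)"
    using matrix_vector_mult_in_columnspace_gen by blast
qed

lemma range_mult_eq_if_subset_dim_le:
  fixes M :: "'a::field^'n^'m" and N :: "'a^'p^'m"
  assumes "range ((*v) M) \<subseteq> range ((*v) N)"
    and "vec.dim (range ((*v) N)) \<le> vec.dim (range ((*v) M))"
  shows "range ((*v) M) = range ((*v) N)"
  using vec.dim_eq_span[OF assms] by (simp add: span_range_mult)

lemma rank_eq_dim_range_transpose:
  fixes A :: "'a::field^'n^'m"
  shows "rank A = vec.dim (range ((*v) (transpose A)))"
proof -
  have "rank A = vec.dim (vec.span (columns (transpose A)))"
    by (simp add: row_rank_def_gen)
  then show ?thesis
    by (simp only: span_columns_eq_range)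
qed

lemma range_transpose_mult_subset:
  fixes A :: "'a::comm_semiring_1^'n^'m" and B :: "'a^'p^'n"
  shows "range ((*v) (transpose (A ** B))) \<subseteq> range ((*v) (transpose B))"
  unfolding matrix_transpose_mul range_mult_subset_iff by blast

lemma rank_mul_le_right_gen:
  fixes A :: "'a::field^'n^'m" and B :: "'a^'p^'n"
  shows "rank (A ** B) \<le> rank B"
  unfolding rank_eq_dim_range_transpose
  using range_transpose_mult_subset vec.span_superset by (blast intro: vec.dim_mono)

lemma rank_mul_eq_right_imp_factor:
  fixes A :: "'a::field^'n^'m" and B :: "'a^'p^'n"
  assumes "rank (A ** B) = rank B"
  shows "\<exists>V. B = V ** (A ** B)"
proof -
  have "range ((*v) (transpose (A ** B))) = range ((*v) (transpose B))"
    using assms by (intro range_mult_eq_if_subset_dim_le range_transpose_mult_subset)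
      (simp add: rank_eq_dim_range_transpose)
  then obtain W where "transpose B = transpose (A ** B) ** W"
    using range_mult_subset_iff by blast
  then have "B = transpose W ** (A ** B)"
    by (metis matrix_transpose_mul transpose_transpose)
  then show ?thesis ..
qed

text \<open>If \<open>A = V A\<^sup>2\<close>, then \<open>A\<close> is injective on its range, so \<open>A\<close> maps \<open>R(A)\<close> onto a
  subspace \<open>R(A\<^sup>2) \<subseteq> R(A)\<close> of the same dimension.\<close>

lemma square_right_factor_if_left_factor:
  fixes A :: "'a::field^'n^'n"
  assumes "A = V ** (A ** A)"
  shows "\<exists>U. A = (A ** A) ** U"
proof -
  let ?R = "range ((*v) A)"
  have "z = V *v (A *v z)" if "z \<in> ?R" for z
  proof -
    from that obtain x where "z = A *v x"
      by blast
    then show ?thesis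
      by (simp add: matrix_vector_mul_assoc flip: assms)
  qed
  then have "inj_on ((*v) A) (vec.span ?R)"
    unfolding span_range_mult by (intro inj_onI) metis
  then have "vec.dim ((*v) A ` ?R) = vec.dim ?R"
    by (rule vec.dim_image_eq[OF matrix_vector_mul_linear_gen])
  moreover have "(*v) A ` ?R = range ((*v) (A ** A))"
    by (simp add: image_image matrix_vector_mul_assoc)
  ultimately have "vec.dim (range ((*v) (A ** A))) = vec.dim ?R"
    by simp
  moreover have "range ((*v) (A ** A)) \<subseteq> ?R"
    by (auto simp flip: matrix_vector_mul_assoc)
  ultimately have "?R \<subseteq> range ((*v) (A ** A))"
    using range_mult_eq_if_subset_dim_le by (metis order_refl)
  then show ?thesis
    by (simp add: range_mult_subset_iff)
qed

lemma ex_commuting_inner_inverse: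
  fixes A :: "'a::field^'n^'n"
  assumes "rank (A ** A) = rank A"
  shows "\<exists>G. A ** G ** A = A \<and> A ** G = G ** A"
proof -
  obtain V where V: "A = V ** (A ** A)"
    using rank_mul_eq_right_imp_factor[OF assms] by blast
  then obtain U where U: "A = (A ** A) ** U"
    using square_right_factor_if_left_factor by blast
  have AUA: "A ** U ** A = A"
    by (metis U V matrix_mul_assoc)
  have VA: "V ** A = A ** U"
    by (metis U V matrix_mul_assoc)
  have AG: "A ** (V ** A ** U) = A ** U"
    by (metis U VA matrix_mul_assoc)
  have GA: "(V ** A ** U) ** A = A ** U"
    by (metis AUA VA matrix_mul_assoc)
  show ?thesis
    using AUA AG GA by (intro exI[of _ "V ** A ** U"]) (simp add: matrix_mul_assoc)
qed

lemma square_cancel_iff_commute: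
  fixes A G :: "'a::semiring_1^'n^'n"
  assumes "A ** G ** A = A"
  shows "G ** (A ** A) = A \<and> (A ** A) ** G = A \<longleftrightarrow> A ** G = G ** A"
proof
  assume "G ** (A ** A) = A \<and> (A ** A) ** G = A"
  then have "G ** A = G ** ((A ** A) ** G)" and "(G ** (A ** A)) ** G = A ** G"
    by simp_all
  then show "A ** G = G ** A"
    by (simp add: matrix_mul_assoc)
next
  assume "A ** G = G ** A"
  then show "G ** (A ** A) = A \<and> (A ** A) ** G = A"
    using assms by (metis matrix_mul_assoc)
qed

lemma rank_mpow_ind: "rank (mpow A (ind A)) = rank (mpow A (ind A + 1))"
proof -
  have "\<exists>k. rank (mpow A k) = rank (mpow A (k + 1))"
  proof (rule ccontr)
    assume "\<nexists>k. rank (mpow A k) = rank (mpow A (k + 1))"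
    then have decreasing: "rank (mpow A (Suc k)) < rank (mpow A k)" for k
      using rank_mul_le_right_gen[of A "mpow A k"] by (metis Suc_eq_plus1 mpow.simps(2) nat_less_le)
    have "rank (mpow A k) + k \<le> rank (mpow A 0)" for k
    proof (induction k)
      case (Suc k)
      then show ?case
        using decreasing[of k] by simp
    qed simp
    from this[of "Suc (rank (mpow A 0))"] show False
      by simp
  qed
  then show ?thesis
    unfolding ind_def by (rule LeastI_ex)
qed

lemma left_invertible_if_ind_0:
  fixes A :: "complex^'n::finite^'n"
  assumes "ind A = 0"
  shows "\<exists>V. V ** A = mat 1"
proof -
  have "rank (A ** mat 1) = rank (mat 1 :: complex^'n^'n)"
    using rank_mpow_ind[of A] assms by simp
  then show ?thesis
    using rank_mul_eq_right_imp_factor by fastforce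
qed

lemma rank_square_eq_if_ind_le_1:
  fixes A :: "complex^'n::finite^'n"
  assumes "ind A \<le> 1"
  shows "rank (A ** A) = rank A"
proof (cases "ind A = 0")
  case True
  then obtain V where "V ** A = mat 1"
    using left_invertible_if_ind_0 by blast
  then have "A = V ** (A ** A)"
    by (metis matrix_mul_assoc matrix_mul_lid)
  then have "rank A \<le> rank (A ** A)"
    by (metis rank_mul_le_right_gen)
  then show ?thesis
    using rank_mul_le_right_gen[of A A] by simp
next
  case False
  with assms have "ind A = 1"
    by simp
  then show ?thesis
    using rank_mpow_ind[of A] by simp
qed

lemma invGD_iff_commuting_inner_inverse:
  fixes A :: "complex^'n::finite^'n"
  assumes "ind A \<le> 1"
  shows "G \<in> invGD A \<longleftrightarrow> A ** G ** A = A \<and> A ** G = G ** A"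
proof (cases "ind A = 0")
  case True
  then obtain V where V: "V ** A = mat 1"
    using left_invertible_if_ind_0 by blast
  have GA: "G ** A = mat 1" if "A ** G ** A = A"
  proof -
    have "G ** A = (V ** A) ** (G ** A)"
      by (simp add: V)
    also have "\<dots> = V ** (A ** G ** A)"
      by (simp add: matrix_mul_assoc)
    finally show ?thesis
      using that V by simp
  qed
  from True have "G \<in> invGD A \<longleftrightarrow> A ** G ** A = A \<and> G ** A = mat 1 \<and> A ** G = mat 1"
    by (simp add: invGD_def)
  with GA show ?thesis
    by auto
next
  case False
  with assms have "ind A = 1"
    by simp
  then show ?thesis
    using square_cancel_iff_commute by (auto simp: invGD_def)
qed

lemma ctrans_mult: "ctrans (X ** Y) = ctrans Y ** ctrans X"
  by (simp add: ctrans_def matrix_matrix_mult_def vec_eq_iff cnj_sum mult.commute)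

lemma ctrans_ctrans [simp]: "ctrans (ctrans X) = X"
  by (simp add: ctrans_def vec_eq_iff)

lemma mrange_ctrans_subset_iff:
  "mrange (ctrans A) \<subseteq> mrange (ctrans B) \<longleftrightarrow> (\<exists>Z. A = Z ** B)"
proof -
  have "mrange (ctrans A) \<subseteq> mrange (ctrans B) \<longleftrightarrow> (\<exists>W. ctrans A = ctrans B ** W)"
    unfolding mrange_def by (rule range_mult_subset_iff)
  also have "\<dots> \<longleftrightarrow> (\<exists>Z. A = Z ** B)"
    by (metis ctrans_ctrans ctrans_mult)
  finally show ?thesis .
qed

lemma sharp_le_iff: "sharp_le A B \<longleftrightarrow> A ** A = B ** A \<and> (\<exists>Z. A = Z ** B)"
  by (simp add: sharp_le_def mrange_ctrans_subset_iff)

lemma sharp_le_imp_GD1_le: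
  fixes A B :: "complex^'n::finite^'n"
  assumes "ind A \<le> 1" and "ind B \<le> 1" and "sharp_le A B"
  shows "GD1_le A B"
proof -
  obtain Z where square: "A ** A = B ** A" and Z: "A = Z ** B"
    using assms(3) by (auto simp: sharp_le_iff)
  obtain G where AGA: "A ** G ** A = A" and comm: "A ** G = G ** A"
    using ex_commuting_inner_inverse rank_square_eq_if_ind_le_1[OF assms(1)] by blast
  obtain H where BHB: "B ** H ** B = B"
    using ex_commuting_inner_inverse rank_square_eq_if_ind_le_1[OF assms(2)] by blast
  have AHB: "A ** H ** B = A"
    by (metis BHB Z matrix_mul_assoc)
  have BGA: "B ** G ** A = A"
    by (metis AGA comm square matrix_mul_assoc)
  have AHA: "A ** H ** A = A"
    by (metis AHB BGA comm square matrix_mul_assoc)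
  have "G \<in> invGD A"
    using AGA comm invGD_iff_commuting_inner_inverse[OF assms(1)] by blast
  moreover have "H \<in> inv1 A"
    using AHA by (simp add: inv1_def)
  ultimately have "G ** A ** H \<in> invGD1 A"
    unfolding invGD1_def by blast
  moreover have "A ** (G ** A ** H) = B ** (G ** A ** H)"
    by (metis AGA BGA matrix_mul_assoc)
  moreover have "(G ** A ** H) ** A = (G ** A ** H) ** B"
    by (metis AHA AHB matrix_mul_assoc)
  ultimately show ?thesis
    unfolding GD1_le_def by blast
qed

lemma GD1_le_imp_sharp_le:
  fixes A B :: "complex^'n::finite^'n"
  assumes "ind A \<le> 1" and "GD1_le A B"
  shows "sharp_le A B"
proof -
  obtain G M where G: "G \<in> invGD A" and AMA: "A ** M ** A = A"
    and left: "A ** (G ** A ** M) = B ** (G ** A ** M)"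
    and right: "(G ** A ** M) ** A = (G ** A ** M) ** B"
    using assms(2) by (auto simp: GD1_le_def invGD1_def inv1_def)
  have AGA: "A ** G ** A = A" and comm: "A ** G = G ** A"
    using G invGD_iff_commuting_inner_inverse[OF assms(1)] by auto
  have "A ** M = B ** G ** A ** M"
    using left AGA by (metis matrix_mul_assoc)
  then have BGA: "B ** G ** A = A"
    by (metis AMA matrix_mul_assoc)
  have square: "A ** A = B ** A"
    by (metis AGA BGA comm matrix_mul_assoc)
  have "G ** A = G ** A ** M ** B"
    using right AMA by (metis matrix_mul_assoc)
  then have "A = (A ** M) ** B"
    by (metis AGA matrix_mul_assoc)
  with square show ?thesis
    unfolding sharp_le_iff by blast
qed

theorem theorem2p14:
  fixes A B :: "complex^'n::finite^'n"
  assumes "ind A \<le> 1" and "ind B \<le> 1"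
  shows "sharp_le A B \<longleftrightarrow> GD1_le A B"
  using assms sharp_le_imp_GD1_le GD1_le_imp_sharp_le by blast

end
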